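(* Let $G$ be a simple graph with $m \ge 4$ edges, and let $\Delta_1 \ge \dots \ge \Delta_m$ and $\psi_1,\dots,\psi_m$ be as defined below. Then for no $k$ with $4 \le k \le m$ does $G$ satisfy both $q(G) < \min\{\psi_i : 1 \le i \le k-1\}$ and $q(G) = \psi_k$.
   Context: $q(G)$ denotes the largest eigenvalue of the signless Laplacian $D + A$ of $G$. For each edge $uv$ of $G$ put $d_u + d_v - 2$, and let $\Delta_1 \ge \dots \ge \Delta_m$ be these numbers in non-increasing order. For $1 \le k \le m$, \[ \psi_k := 1 + \frac{\Delta_k + 1 + \sqrt{(\Delta_k+1)^2 + 4\sum_{i=1}^{k-1}(\Delta_i - \Delta_k)}}{2}. \] It holds that $q(G) \le \psi_k$ for all $k$, with equality iff $\Delta_1 = \Delta_m$ or there exists $2 \le t \le k$ with $m-1 = \Delta_1 = \Delta_{t-1} > \Delta_t = \Delta_m$. *)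

theory Defs
  imports "HOL-Analysis.Analysis" "HOL-Library.Multiset"
begin

definition simple_graph :: "('n::finite \<Rightarrow> 'n \<Rightarrow> bool) \<Rightarrow> bool" where
  "simple_graph E \<longleftrightarrow> (\<forall>u v. E u v \<longrightarrow> E v u) \<and> (\<forall>u. \<not> E u u)"

definition edges :: "('n::finite \<Rightarrow> 'n \<Rightarrow> bool) \<Rightarrow> 'n set set" where
  "edges E = {{u, v} | u v. E u v}"

definition num_edges :: "('n::finite \<Rightarrow> 'n \<Rightarrow> bool) \<Rightarrow> nat" where
  "num_edges E = card (edges E)"

definition degree :: "('n::finite \<Rightarrow> 'n \<Rightarrow> bool) \<Rightarrow> 'n \<Rightarrow> nat" where
  "degree E u = card {v. E u v}"

definition signless_laplacian :: "('n::finite \<Rightarrow> 'n \<Rightarrow> bool) \<Rightarrow> real^'n^'n" where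
  "signless_laplacian E = (\<chi> i j. (if i = j then real (degree E i) else 0)
                                  + (if E i j then 1 else 0))"

text \<open>q(G): the largest eigenvalue of the signless Laplacian (a real symmetric matrix,
so all eigenvalues are real).\<close>
definition q_index :: "('n::finite \<Rightarrow> 'n \<Rightarrow> bool) \<Rightarrow> real" where
  "q_index E = Max {c. \<exists>x. x \<noteq> 0 \<and> signless_laplacian E *v x = c *\<^sub>R x}"

definition edge_val :: "('n::finite \<Rightarrow> 'n \<Rightarrow> bool) \<Rightarrow> 'n set \<Rightarrow> int" where
  "edge_val E e = (\<Sum>u\<in>e. int (degree E u)) - 2"

text \<open>The list \<Delta>_1 \<ge> ... \<ge> \<Delta>_m (stored 0-based).\<close>
definition Deltas :: "('n::finite \<Rightarrow> 'n \<Rightarrow> bool) \<Rightarrow> int list" where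
  "Deltas E = rev (sorted_list_of_multiset (image_mset (edge_val E) (mset_set (edges E))))"

definition Delta :: "('n::finite \<Rightarrow> 'n \<Rightarrow> bool) \<Rightarrow> nat \<Rightarrow> real" where
  "Delta E i = real_of_int (Deltas E ! (i - 1))"

definition psi :: "('n::finite \<Rightarrow> 'n \<Rightarrow> bool) \<Rightarrow> nat \<Rightarrow> real" where
  "psi E k = 1 + (Delta E k + 1
     + sqrt ((Delta E k + 1)^2 + 4 * (\<Sum>i=1..k-1. Delta E i - Delta E k))) / 2"

end

theory Submission
  imports Defs
begin

text \<open>
  Let x be an eigenvector of Q for q = q(G). Summing x over the ends of each edge gives an
  eigenvector z of the line graph L(G) for \<rho> = q - 2, and the degree of an edge in L(G) is
  \<Delta>(e) = d_u + d_v - 2. If q = psi_k while q < psi_i for i < k, then \<Delta>_(k-1) > \<Delta>_k, and with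
  K the first k - 1 edges one builds a positive weight w on the edges (1 outside K, larger on K)
  with A(L(G)) w \<le> \<rho> w. Comparing |z| with a multiple of w at an edge where |z|/w is maximal
  forces equality in a subset of L(G) closed under adjacency, which in turn forces K to be a
  connected component of L(G) that is a clique with all \<Delta>-values k - 2, and \<rho> = k - 2. But then
  psi_1 = \<Delta>_1 + 2 = k = q, contradicting q < psi_1.
\<close>

section \<open>Eigenvectors of symmetric matrices\<close>

lemma symmetric_matrix_inner:
  fixes A :: "real^'n^'n"
  assumes "transpose A = A"
  shows "inner (A *v x) y = inner x (A *v y)"
  by (metis assms dot_lmul_matrix vector_transpose_matrix)

lemma finite_eigenvalues_symmetric:
  fixes A :: "real^'n^'n"
  assumes "transpose A = A"
  shows "finite {c. \<exists>x. x \<noteq> 0 \<and> A *v x = c *\<^sub>R x}"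
proof -
  define S where "S = {c. \<exists>x. x \<noteq> 0 \<and> A *v x = c *\<^sub>R x}"
  define v where "v c = (SOME x. x \<noteq> 0 \<and> A *v x = c *\<^sub>R x)" for c
  have v: "v c \<noteq> 0 \<and> A *v v c = c *\<^sub>R v c" if "c \<in> S" for c
    using that unfolding S_def v_def by (metis (mono_tags, lifting) mem_Collect_eq someI_ex)
  have inj: "inj_on v S"
  proof (rule inj_onI)
    fix c d assume "c \<in> S" "d \<in> S" "v c = v d"
    then have "c *\<^sub>R v c = d *\<^sub>R v c" "v c \<noteq> 0" using v by metis+
    then show "c = d" by (simp add: scaleR_cancel_right)
  qed
  have "pairwise orthogonal (v ` S)"
  proof (clarsimp simp: pairwise_def)
    fix c d assume cd: "c \<in> S" "d \<in> S" "v c \<noteq> v d"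
    then have "c \<noteq> d" by auto
    have "c * inner (v c) (v d) = inner (A *v v c) (v d)" using v[OF cd(1)] by simp
    also have "\<dots> = inner (v c) (A *v v d)" by (rule symmetric_matrix_inner[OF assms])
    also have "\<dots> = d * inner (v c) (v d)" using v[OF cd(2)] by simp
    finally show "orthogonal (v c) (v d)" using \<open>c \<noteq> d\<close> by (simp add: orthogonal_def)
  qed
  moreover have "0 \<notin> v ` S" using v by auto
  ultimately have "finite (v ` S)"
    using pairwise_orthogonal_independent independent_bound by blast
  then show ?thesis using inj finite_imageD unfolding S_def by blast
qed

text \<open>A unit vector maximising the quadratic form is an eigenvector: moving it along the residual
  A x - l x would otherwise push the quadratic form above l to first order.\<close>
lemma quadratic_form_max_eigenvector:
  fixes A :: "real^'n^'n"
  assumes sym: "transpose A = A"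
    and le: "\<And>y. inner y (A *v y) \<le> l * (norm y)\<^sup>2"
    and x: "norm x = 1" "inner x (A *v x) = l"
  shows "A *v x = l *\<^sub>R x"
proof (rule ccontr)
  define y where "y = A *v x - l *\<^sub>R x"
  define a where "a = inner y (A *v y) - l * inner y y"
  assume "A *v x \<noteq> l *\<^sub>R x"
  then have yy: "inner y y > 0" by (simp add: y_def)
  have quad: "2 * t * inner y y + t\<^sup>2 * a \<le> 0" for t
  proof -
    have xx: "inner x x = 1" using x(1) by (simp add: dot_square_norm)
    have "inner (x + t *\<^sub>R y) (A *v (x + t *\<^sub>R y)) \<le> l * (norm (x + t *\<^sub>R y))\<^sup>2"
      by (rule le)
    moreover have "inner (x + t *\<^sub>R y) (A *v (x + t *\<^sub>R y))
        = l + 2 * t * inner y (A *v x) + t\<^sup>2 * inner y (A *v y)"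
      using symmetric_matrix_inner[OF sym, of x y] x(2)
      by (simp add: matrix_vector_right_distrib matrix_vector_mult_scaleR inner_add_left
          inner_add_right power2_eq_square algebra_simps inner_commute)
    moreover have "(norm (x + t *\<^sub>R y))\<^sup>2 = 1 + 2 * t * inner x y + t\<^sup>2 * inner y y"
      unfolding power2_norm_eq_inner
      by (simp add: inner_add_left inner_add_right xx power2_eq_square algebra_simps inner_commute)
    moreover have "inner y (A *v x) - l * inner x y = inner y y"
      unfolding y_def by (simp add: inner_diff_left inner_diff_right inner_commute algebra_simps)
    ultimately show ?thesis by (simp add: a_def algebra_simps power2_eq_square)
  qed
  define c where "c = \<bar>a\<bar> + 1"
  define t where "t = inner y y / c"
  have "c > 0" "t > 0" using yy by (simp_all add: c_def t_def)
  have "t\<^sup>2 * (- c) \<le> t\<^sup>2 * a" by (intro mult_left_mono) (auto simp: c_def)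
  moreover have "t\<^sup>2 * (- c) = - (t * inner y y)" using \<open>c > 0\<close> by (simp add: t_def power2_eq_square)
  moreover have "t * inner y y > 0" using \<open>t > 0\<close> yy by simp
  ultimately show False using quad[of t] by linarith
qed

lemma eigenvector_exists_symmetric:
  fixes A :: "real^'n^'n"
  assumes sym: "transpose A = A"
  shows "\<exists>c x. x \<noteq> 0 \<and> A *v x = c *\<^sub>R x"
proof -
  define f where "f x = inner x (A *v x)" for x :: "real^'n"
  have "continuous_on (sphere 0 1) f"
    unfolding f_def by (intro continuous_intros linear_continuous_on matrix_vector_mul_linear_gen)
  moreover have "sphere (0::real^'n) 1 \<noteq> {}"
    by (metis norm_axis_1 mem_sphere_0 empty_iff)
  ultimately obtain x where x: "x \<in> sphere 0 1" and max: "\<And>y. y \<in> sphere 0 1 \<Longrightarrow> f y \<le> f x"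
    using continuous_attains_sup[OF compact_sphere] by blast
  have "f y \<le> f x * (norm y)\<^sup>2" for y
  proof (cases "y = 0")
    case False
    then have "f ((1 / norm y) *\<^sub>R y) \<le> f x" by (intro max) simp
    then show ?thesis
      using False by (simp add: f_def matrix_vector_mult_scaleR field_simps power2_eq_square)
  qed (simp add: f_def)
  then have "A *v x = f x *\<^sub>R x"
    using x by (intro quadratic_form_max_eigenvector[OF sym]) (simp_all add: f_def)
  moreover have "x \<noteq> 0" using x by auto
  ultimately show ?thesis by blast
qed

section \<open>Comparison with a sub-eigenvector\<close>

lemma sum_eq_imp_subset_eq:
  fixes g :: "'a \<Rightarrow> real"
  assumes "finite B" "A \<subseteq> B" "\<And>b. b \<in> B \<Longrightarrow> 0 < g b" "sum g A = sum g B"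
  shows "A = B"
  using sum_strict_mono2[of B A _ g] assms by (metis Diff_iff less_le order.refl subset_antisym subsetI)

text \<open>A Perron-Frobenius type comparison: where |z|/w is maximal, every step of
  \<rho> |z e| \<le> \<Sum>f\<in>N e. |z f| \<le> M \<Sum>f\<in>N e. w f \<le> M \<rho> w e is an equality, so the maximum propagates to
  N e and w is tight at e.\<close>
lemma tight_set_exists:
  fixes N :: "'a \<Rightarrow> 'a set" and z w :: "'a \<Rightarrow> real"
  assumes V: "finite V" "\<And>e. e \<in> V \<Longrightarrow> N e \<subseteq> V" and "0 \<le> \<rho>"
    and z: "\<And>e. e \<in> V \<Longrightarrow> (\<Sum>f\<in>N e. z f) = \<rho> * z e" "\<exists>e\<in>V. z e \<noteq> 0"
    and w: "\<And>e. e \<in> V \<Longrightarrow> 0 < w e" "\<And>e. e \<in> V \<Longrightarrow> (\<Sum>f\<in>N e. w f) \<le> \<rho> * w e"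
  obtains T where "T \<subseteq> V" "T \<noteq> {}" "\<And>e. e \<in> T \<Longrightarrow> N e \<subseteq> T \<and> (\<Sum>f\<in>N e. w f) = \<rho> * w e"
proof -
  define M where "M = Max ((\<lambda>f. \<bar>z f\<bar> / w f) ` V)"
  define T where "T = {e \<in> V. \<bar>z e\<bar> = M * w e}"
  have V_ne: "V \<noteq> {}" using z(2) by blast
  have le_M: "\<bar>z f\<bar> \<le> M * w f" if "f \<in> V" for f
  proof -
    have "\<bar>z f\<bar> / w f \<le> M" unfolding M_def using V(1) that by (intro Max_ge) auto
    then show ?thesis using w(1)[OF that] by (simp add: pos_divide_le_eq)
  qed
  have "M \<in> (\<lambda>f. \<bar>z f\<bar> / w f) ` V" unfolding M_def using V(1) V_ne by (intro Max_in) auto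
  then obtain e where "e \<in> V" "M = \<bar>z e\<bar> / w e" by blast
  then have "e \<in> T" using w(1)[of e] by (simp add: T_def)
  then have "T \<noteq> {}" by blast
  have "M > 0"
  proof -
    obtain e where "e \<in> V" "z e \<noteq> 0" using z(2) by blast
    then show ?thesis using le_M[of e] w(1)[of e] by (smt (verit) mult_nonpos_nonneg)
  qed
  have tight: "N e \<subseteq> T \<and> (\<Sum>f\<in>N e. w f) = \<rho> * w e" if e: "e \<in> T" for e
  proof -
    have eV: "e \<in> V" and ze: "\<bar>z e\<bar> = M * w e" using e by (auto simp: T_def)
    have NV: "finite (N e)" "N e \<subseteq> V" using V eV finite_subset by blast+
    have "\<rho> * \<bar>z e\<bar> = \<bar>\<Sum>f\<in>N e. z f\<bar>" using z(1)[OF eV] \<open>0 \<le> \<rho>\<close> by (simp add: abs_mult)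
    also have "\<dots> \<le> (\<Sum>f\<in>N e. \<bar>z f\<bar>)" by (rule sum_abs)
    finally have lower: "\<rho> * \<bar>z e\<bar> \<le> (\<Sum>f\<in>N e. \<bar>z f\<bar>)" .
    have middle: "(\<Sum>f\<in>N e. \<bar>z f\<bar>) \<le> (\<Sum>f\<in>N e. M * w f)"
      using NV le_M by (intro sum_mono) blast
    have upper: "(\<Sum>f\<in>N e. M * w f) \<le> \<rho> * \<bar>z e\<bar>"
      using w(2)[OF eV] \<open>M > 0\<close> ze by (simp add: sum_distrib_left[symmetric] algebra_simps)
    have chain: "(\<Sum>f\<in>N e. \<bar>z f\<bar>) = (\<Sum>f\<in>N e. M * w f)"
      and "M * (\<Sum>f\<in>N e. w f) = M * (\<rho> * w e)"
      using lower middle upper ze by (simp_all add: sum_distrib_left algebra_simps)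
    then have sum_w: "(\<Sum>f\<in>N e. w f) = \<rho> * w e" using \<open>M > 0\<close> by simp
    have "(\<Sum>f\<in>N e. M * w f - \<bar>z f\<bar>) = 0" using chain by (simp add: sum_subtractf)
    then have "\<forall>f\<in>N e. M * w f - \<bar>z f\<bar> = 0"
      using NV le_M by (subst sum_nonneg_eq_0_iff[symmetric]) (auto simp: subset_iff)
    then have "N e \<subseteq> T" using NV(2) by (auto simp: T_def)
    then show ?thesis using sum_w by blast
  qed
  show ?thesis by (rule that[OF _ \<open>T \<noteq> {}\<close> tight]) (auto simp: T_def)
qed

section \<open>The line graph\<close>

definition adj_edges :: "('n::finite \<Rightarrow> 'n \<Rightarrow> bool) \<Rightarrow> 'n set \<Rightarrow> 'n set set" where
  "adj_edges E e = {f \<in> edges E. f \<noteq> e \<and> f \<inter> e \<noteq> {}}"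

definition edge_sum :: "real^'n \<Rightarrow> 'n set \<Rightarrow> real" where
  "edge_sum x e = (\<Sum>u\<in>e. x$u)"

lemma finite_adj_edges [simp]: "finite (adj_edges E e)"
  by (simp add: adj_edges_def)

context
  fixes E :: "'n::finite \<Rightarrow> 'n \<Rightarrow> bool"
  assumes simple: "simple_graph E"
begin

lemma adj_sym: "E u v \<Longrightarrow> E v u"
  using simple by (simp add: simple_graph_def)

lemma adj_neq: "E u v \<Longrightarrow> u \<noteq> v"
  using simple by (auto simp: simple_graph_def)

lemma mem_edges_iff: "e \<in> edges E \<longleftrightarrow> (\<exists>u v. E u v \<and> e = {u, v})"
  by (auto simp: edges_def)

lemma edge_val_pair: "E u v \<Longrightarrow> edge_val E {u, v} = int (degree E u) + int (degree E v) - 2"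
  using adj_neq by (simp add: edge_val_def)

lemma degree_pos: "E u v \<Longrightarrow> 1 \<le> degree E u"
proof -
  assume "E u v"
  then have "{w. E u w} \<noteq> {}" by blast
  then show ?thesis by (simp add: degree_def Suc_le_eq card_gt_0_iff)
qed

lemma edge_val_nonneg: "e \<in> edges E \<Longrightarrow> 0 \<le> edge_val E e"
proof -
  assume "e \<in> edges E"
  then obtain u v where uv: "E u v" "e = {u, v}" using mem_edges_iff by blast
  then show ?thesis using edge_val_pair degree_pos[OF uv(1)] degree_pos[OF adj_sym[OF uv(1)]] by simp
qed

lemma edge_at_vertex:
  assumes "e \<in> edges E" "c \<in> e"
  obtains a where "e = {c, a}" "E c a"
proof -
  obtain u v where uv: "E u v" "e = {u, v}" using assms(1) mem_edges_iff by blast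
  then consider "c = u" | "c = v" using assms(2) by blast
  then show ?thesis
    using that uv adj_sym[OF uv(1)] by cases (auto simp: insert_commute)
qed

lemma edges_at_vertex: "{f \<in> edges E. u \<in> f} = (\<lambda>w. {u, w}) ` {w. E u w}"
proof (intro equalityI subsetI)
  fix f assume "f \<in> {f \<in> edges E. u \<in> f}"
  then obtain a where "f = {u, a}" "E u a" using edge_at_vertex by blast
  then show "f \<in> (\<lambda>w. {u, w}) ` {w. E u w}" by blast
qed (auto simp: edges_def)

lemma inj_on_edges_at_vertex: "inj_on (\<lambda>w. {u, w}) {w. E u w}"
  by (rule inj_onI) (auto simp: doubleton_eq_iff dest: adj_neq)

lemma card_edges_at_vertex: "card {f \<in> edges E. u \<in> f} = degree E u"
  unfolding edges_at_vertex degree_def by (rule card_image[OF inj_on_edges_at_vertex])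

lemma adj_edges_pair:
  assumes "E u v"
  shows "adj_edges E {u, v} = ({f \<in> edges E. u \<in> f} - {{u, v}}) \<union> ({f \<in> edges E. v \<in> f} - {{u, v}})"
    and "({f \<in> edges E. u \<in> f} - {{u, v}}) \<inter> ({f \<in> edges E. v \<in> f} - {{u, v}}) = {}"
  using assms by (auto simp: adj_edges_def edges_def doubleton_eq_iff dest: adj_neq)

lemma card_adj_edges:
  assumes "e \<in> edges E"
  shows "int (card (adj_edges E e)) = edge_val E e"
proof -
  obtain u v where uv: "E u v" "e = {u, v}" using assms mem_edges_iff by blast
  have "{u, v} \<in> {f \<in> edges E. u \<in> f}" "{u, v} \<in> {f \<in> edges E. v \<in> f}"
    using uv by (auto simp: edges_def)
  moreover have "card (adj_edges E e)
      = card ({f \<in> edges E. u \<in> f} - {{u, v}}) + card ({f \<in> edges E. v \<in> f} - {{u, v}})"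
    unfolding uv adj_edges_pair(1)[OF uv(1)]
    by (rule card_Un_disjoint) (use adj_edges_pair(2)[OF uv(1)] in auto)
  ultimately show ?thesis
    using uv edge_val_pair degree_pos[OF uv(1)] degree_pos[OF adj_sym[OF uv(1)]]
    by (simp add: card_edges_at_vertex)
qed

lemma signless_laplacian_symmetric: "transpose (signless_laplacian E) = signless_laplacian E"
  using adj_sym by (auto simp: vec_eq_iff transpose_def signless_laplacian_def)

lemma q_index_eigenvector: "\<exists>x. x \<noteq> 0 \<and> signless_laplacian E *v x = q_index E *\<^sub>R x"
proof -
  let ?S = "{c. \<exists>x. x \<noteq> 0 \<and> signless_laplacian E *v x = c *\<^sub>R x}"
  have "finite ?S" "?S \<noteq> {}"
    using finite_eigenvalues_symmetric eigenvector_exists_symmetric signless_laplacian_symmetric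
    by auto
  then have "q_index E \<in> ?S" unfolding q_index_def by (rule Max_in)
  then show ?thesis by blast
qed

lemma signless_laplacian_mult_vertex:
  "(signless_laplacian E *v x) $ u = (\<Sum>f\<in>{f \<in> edges E. u \<in> f}. edge_sum x f)"
proof -
  have "(signless_laplacian E *v x) $ u
      = (\<Sum>j\<in>UNIV. (if u = j then real (degree E u) * x$j else 0) + (if E u j then x$j else 0))"
    unfolding matrix_vector_mult_def signless_laplacian_def vec_lambda_beta
    by (intro sum.cong refl) (simp add: distrib_right)
  also have "\<dots> = real (degree E u) * x$u + (\<Sum>w\<in>{w. E u w}. x$w)"
    by (simp add: sum.distrib sum.delta sum.inter_filter[symmetric])
  also have "\<dots> = (\<Sum>w\<in>{w. E u w}. x$u + x$w)"
    by (simp add: sum.distrib degree_def)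
  also have "\<dots> = (\<Sum>w\<in>{w. E u w}. edge_sum x {u, w})"
    by (intro sum.cong) (auto simp: edge_sum_def dest: adj_neq)
  also have "\<dots> = (\<Sum>f\<in>{f \<in> edges E. u \<in> f}. edge_sum x f)"
    unfolding edges_at_vertex by (rule sum.reindex[OF inj_on_edges_at_vertex, symmetric, unfolded comp_def])
  finally show ?thesis .
qed

lemma adj_edges_sum_eigen:
  assumes "signless_laplacian E *v x = q *\<^sub>R x" "e \<in> edges E"
  shows "(\<Sum>f\<in>adj_edges E e. edge_sum x f) = (q - 2) * edge_sum x e"
proof -
  obtain u v where uv: "E u v" "e = {u, v}" using assms(2) mem_edges_iff by blast
  have "e \<in> {f \<in> edges E. u \<in> f}" "e \<in> {f \<in> edges E. v \<in> f}" using assms(2) uv by auto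
  then have at_u: "(\<Sum>f\<in>{f \<in> edges E. u \<in> f} - {e}. edge_sum x f) = q * x$u - edge_sum x e"
    and at_v: "(\<Sum>f\<in>{f \<in> edges E. v \<in> f} - {e}. edge_sum x f) = q * x$v - edge_sum x e"
    using signless_laplacian_mult_vertex[of x u] signless_laplacian_mult_vertex[of x v] assms(1)
    by (simp_all add: sum_diff1)
  have "(\<Sum>f\<in>adj_edges E e. edge_sum x f)
      = (\<Sum>f\<in>{f \<in> edges E. u \<in> f} - {e}. edge_sum x f) + (\<Sum>f\<in>{f \<in> edges E. v \<in> f} - {e}. edge_sum x f)"
    unfolding uv adj_edges_pair(1)[OF uv(1)]
    by (rule sum.union_disjoint) (use adj_edges_pair(2)[OF uv(1)] in auto)
  moreover have "edge_sum x e = x$u + x$v" using uv adj_neq[OF uv(1)] by (simp add: edge_sum_def)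
  ultimately show ?thesis using at_u at_v by (simp add: algebra_simps)
qed

lemma edge_sum_nonzero:
  assumes "signless_laplacian E *v x = q *\<^sub>R x" "x \<noteq> 0" "q \<noteq> 0"
  shows "\<exists>e\<in>edges E. edge_sum x e \<noteq> 0"
proof (rule ccontr)
  assume "\<not> ?thesis"
  then have "(signless_laplacian E *v x) $ u = 0" for u
    by (simp add: signless_laplacian_mult_vertex)
  then have "q * x$u = 0" for u
    using assms(1) by (metis vector_scaleR_component real_scaleR_def)
  then have "x = 0" using assms(3) by (simp add: vec_eq_iff)
  then show False using assms(2) by simp
qed

end

lemma four_meeting_edges_common_vertex:
  assumes e: "e1 = {a1, b1}" "e2 = {a2, b2}" "e3 = {a3, b3}" "g = {a4, b4}" "a1 \<noteq> b1" "a4 \<noteq> b4"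
    and distinct: "e1 \<noteq> e2" "e1 \<noteq> e3" "e2 \<noteq> e3" "g \<noteq> e1" "g \<noteq> e2" "g \<noteq> e3"
    and meet: "e1 \<inter> e2 \<noteq> {}" "e1 \<inter> e3 \<noteq> {}" "e2 \<inter> e3 \<noteq> {}"
      "g \<inter> e1 \<noteq> {}" "g \<inter> e2 \<noteq> {}" "g \<inter> e3 \<noteq> {}"
  shows "\<exists>c. c \<in> e1 \<and> c \<in> e2 \<and> c \<in> e3 \<and> c \<in> g"
proof -
  obtain c where c: "c \<in> e1" "c \<in> g" using meet(4) by blast
  obtain a where a: "e1 = {c, a}" "c \<noteq> a" using c(1) e(1,5) by auto
  obtain b where b: "g = {c, b}" "c \<noteq> b" using c(2) e(4,6) by auto
  have "a \<noteq> b" using a b distinct(4) by auto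
  then have avoid_c: "e = {a, b}" if "e = {x, y}" "c \<notin> e" "e \<inter> e1 \<noteq> {}" "e \<inter> g \<noteq> {}" for e x y
    using that a b by auto
  show ?thesis
  proof (cases "c \<in> e2"; cases "c \<in> e3")
    assume "c \<in> e2" "c \<notin> e3"
    then have "e3 = {a, b}" using avoid_c[OF e(3) \<open>c \<notin> e3\<close>] meet(2,6) by (simp add: Int_commute)
    moreover obtain d where "e2 = {c, d}" using \<open>c \<in> e2\<close> e(2) by auto
    ultimately show ?thesis using meet(3) a b distinct(1,5) by auto
  next
    assume "c \<notin> e2" "c \<in> e3"
    then have "e2 = {a, b}" using avoid_c[OF e(2) \<open>c \<notin> e2\<close>] meet(1,5) by (simp add: Int_commute)
    moreover obtain d where "e3 = {c, d}" using \<open>c \<in> e3\<close> e(3) by auto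
    ultimately show ?thesis using meet(3) a b distinct(2,6) by auto
  next
    assume "c \<notin> e2" "c \<notin> e3"
    then have "e2 = {a, b}" "e3 = {a, b}"
      using avoid_c[OF e(2) \<open>c \<notin> e2\<close>] avoid_c[OF e(3) \<open>c \<notin> e3\<close>] meet(1,2,5,6)
      by (simp_all add: Int_commute)
    then show ?thesis using distinct(3) by simp
  qed (use c in blast)
qed

text \<open>As card K \<ge> 3, the edges of K and g form a star at some vertex c, and the other end of an
  edge of K is a leaf.\<close>
lemma edge_val_le_if_meets_all:
  assumes simple: "simple_graph E" and K: "K \<subseteq> edges E" "3 \<le> card K"
    and meets_all: "\<And>h e f. h \<in> edges E \<Longrightarrow> e \<in> K \<Longrightarrow> f \<in> K \<Longrightarrow> h \<inter> e \<noteq> {} \<Longrightarrow> h \<inter> f \<noteq> {}"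
    and g: "g \<in> edges E" "g \<notin> K" "e \<in> K" "g \<inter> e \<noteq> {}"
  shows "\<exists>f\<in>K. edge_val E f \<le> edge_val E g"
proof -
  obtain T where T: "T \<subseteq> K" "card T = 3" using obtain_subset_with_card_n[OF K(2)] .
  then obtain e1 e2 e3 where T3: "T = {e1, e2, e3}" and ne: "e1 \<noteq> e2" "e2 \<noteq> e3" "e1 \<noteq> e3"
    using card_3_iff by metis
  have inK: "e1 \<in> K" "e2 \<in> K" "e3 \<in> K" using T(1) T3 by auto
  have inE: "e1 \<in> edges E" "e2 \<in> edges E" "e3 \<in> edges E" using inK K(1) by auto
  have self: "f \<inter> f \<noteq> {}" if "f \<in> edges E" for f
    using that by (auto simp: edges_def)
  have meet: "e1 \<inter> e2 \<noteq> {}" "e1 \<inter> e3 \<noteq> {}" "e2 \<inter> e3 \<noteq> {}"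
    "g \<inter> e1 \<noteq> {}" "g \<inter> e2 \<noteq> {}" "g \<inter> e3 \<noteq> {}"
    using meets_all[OF inE(1) inK(1) inK(2) self[OF inE(1)]]
      meets_all[OF inE(1) inK(1) inK(3) self[OF inE(1)]]
      meets_all[OF inE(2) inK(2) inK(3) self[OF inE(2)]]
      meets_all[OF g(1) g(3) inK(1) g(4)] meets_all[OF g(1) g(3) inK(2) g(4)]
      meets_all[OF g(1) g(3) inK(3) g(4)]
    by simp_all
  obtain u1 v1 where 1: "E u1 v1" "e1 = {u1, v1}" using inE(1) mem_edges_iff[OF simple] by blast
  obtain u2 v2 where 2: "e2 = {u2, v2}" using inE(2) mem_edges_iff[OF simple] by blast
  obtain u3 v3 where 3: "e3 = {u3, v3}" using inE(3) mem_edges_iff[OF simple] by blast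
  obtain u4 v4 where 4: "E u4 v4" "g = {u4, v4}" using g(1) mem_edges_iff[OF simple] by blast
  have "g \<noteq> e1" "g \<noteq> e2" "g \<noteq> e3" using g(2) inK by auto
  then obtain c where c: "c \<in> e1" "c \<in> e2" "c \<in> e3" "c \<in> g"
    using four_meeting_edges_common_vertex[OF 1(2) 2 3 4(2) adj_neq[OF simple 1(1)]
        adj_neq[OF simple 4(1)] ne(1,3,2) _ _ _ meet] by blast
  obtain a1 where a1: "e1 = {c, a1}" "E c a1" using edge_at_vertex[OF simple inE(1) c(1)] .
  obtain a2 where a2: "e2 = {c, a2}" using edge_at_vertex[OF simple inE(2) c(2)] .
  obtain a3 where a3: "e3 = {c, a3}" using edge_at_vertex[OF simple inE(3) c(3)] .
  obtain b where b: "g = {c, b}" "E c b" using edge_at_vertex[OF simple g(1) c(4)] .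
  have "a1 \<noteq> c" "a1 \<noteq> a2" "a1 \<noteq> a3" "a2 \<noteq> a3"
    using adj_neq[OF simple a1(2)] ne a1(1) a2 a3 by auto
  have leaf: "{w. E a1 w} = {c}"
  proof (intro equalityI subsetI)
    fix w assume "w \<in> {w. E a1 w}"
    then have w: "{a1, w} \<in> edges E" by (auto simp: edges_def)
    have "{a1, w} \<inter> e1 \<noteq> {}" using a1(1) by auto
    then have "{a1, w} \<inter> e2 \<noteq> {}" "{a1, w} \<inter> e3 \<noteq> {}"
      using meets_all[OF w inK(1) inK(2)] meets_all[OF w inK(1) inK(3)] by simp_all
    then show "w \<in> {c}"
      unfolding a2 a3 using \<open>a1 \<noteq> c\<close> \<open>a1 \<noteq> a2\<close> \<open>a1 \<noteq> a3\<close> \<open>a2 \<noteq> a3\<close> by auto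
  qed (use a1(2) adj_sym[OF simple] in auto)
  have "edge_val E e1 = int (degree E c) - 1"
    using a1 edge_val_pair[OF simple a1(2)] leaf by (simp add: degree_def)
  moreover have "edge_val E g = int (degree E c) + int (degree E b) - 2"
    using b edge_val_pair[OF simple] by simp
  moreover have "1 \<le> degree E b" using degree_pos[OF simple adj_sym[OF simple b(2)]] .
  ultimately show ?thesis using inK(1) by (intro bexI[of _ e1]) auto
qed

section \<open>The weight argument\<close>

text \<open>In the application K consists of the first k - 1 edges, d = \<Delta>_k and \<rho> = q - 2; the last
  assumption says that q = psi_k.\<close>
locale top_edges =
  fixes E :: "'n::finite \<Rightarrow> 'n \<Rightarrow> bool" and K :: "'n set set" and d \<rho> :: real
  assumes simple: "simple_graph E"
    and K_edges: "K \<subseteq> edges E"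
    and above: "\<And>f. f \<in> K \<Longrightarrow> d < of_int (edge_val E f)"
    and below: "\<And>f. f \<in> edges E \<Longrightarrow> f \<notin> K \<Longrightarrow> of_int (edge_val E f) \<le> d"
    and d_nonneg: "0 \<le> d" and d_le_rho: "d \<le> \<rho>"
    and rho_root: "(\<rho> - d) * (\<rho> + 1) = (\<Sum>f\<in>K. of_int (edge_val E f) - d)"
begin

text \<open>The test vector of the argument: positive, and A w \<le> \<rho> w for the adjacency matrix A of the
  line graph (lemma sum_adj_weight_le).\<close>
definition weight :: "'n set \<Rightarrow> real" where
  "weight f = 1 + (if f \<in> K then (of_int (edge_val E f) - d) / (\<rho> + 1) else 0)"

lemma finite_K: "finite K"
  using K_edges finite_subset by fastforce

lemma rho_plus_one_pos: "0 < \<rho> + 1"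
  using d_nonneg d_le_rho by linarith

lemma weight_excess_pos: "f \<in> K \<Longrightarrow> 0 < weight f - 1"
  using above rho_plus_one_pos by (simp add: weight_def)

lemma weight_pos: "0 < weight f"
  using weight_excess_pos by (cases "f \<in> K") (fastforce simp: weight_def)+

lemma sum_weight_excess: "(\<Sum>f\<in>K. weight f - 1) = \<rho> - d"
proof -
  have "(\<Sum>f\<in>K. weight f - 1) = (\<Sum>f\<in>K. of_int (edge_val E f) - d) / (\<rho> + 1)"
    by (simp add: weight_def sum_divide_distrib)
  also have "\<dots> = \<rho> - d"
    using rho_root[symmetric] rho_plus_one_pos by simp
  finally show ?thesis .
qed

lemma sum_weight_excess_le: "A \<subseteq> K \<Longrightarrow> (\<Sum>f\<in>A. weight f - 1) \<le> \<rho> - d"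
  using sum_mono2[OF finite_K, of A "\<lambda>f. weight f - 1"] weight_excess_pos sum_weight_excess
  by fastforce

lemma sum_adj_weight:
  assumes "e \<in> edges E"
  shows "(\<Sum>f\<in>adj_edges E e. weight f)
    = of_int (edge_val E e) + (\<Sum>f\<in>adj_edges E e \<inter> K. weight f - 1)"
proof -
  have "(\<Sum>f\<in>adj_edges E e. weight f) = real (card (adj_edges E e)) + (\<Sum>f\<in>adj_edges E e. weight f - 1)"
    by (simp add: sum_subtractf)
  also have "(\<Sum>f\<in>adj_edges E e. weight f - 1) = (\<Sum>f\<in>adj_edges E e \<inter> K. weight f - 1)"
    by (rule sum.mono_neutral_right) (auto simp: weight_def)
  also have "real (card (adj_edges E e)) = of_int (edge_val E e)"
    using card_adj_edges[OF simple assms] by (metis of_int_of_nat_eq)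
  finally show ?thesis .
qed

lemma rho_weight:
  assumes "e \<in> K"
  shows "\<rho> * weight e = of_int (edge_val E e) + (\<Sum>f\<in>K - {e}. weight f - 1)"
proof -
  have "(\<rho> + 1) * weight e = of_int (edge_val E e) + \<rho> - d + 1"
    using assms rho_plus_one_pos by (simp add: weight_def field_simps)
  moreover have "(\<Sum>f\<in>K - {e}. weight f - 1) = \<rho> - d - (weight e - 1)"
    using sum_diff1[OF finite_K, of "\<lambda>f. weight f - 1" e] assms sum_weight_excess by simp
  ultimately show ?thesis by (simp add: algebra_simps)
qed

lemma sum_adj_weight_le:
  assumes "e \<in> edges E"
  shows "(\<Sum>f\<in>adj_edges E e. weight f) \<le> \<rho> * weight e"
proof (cases "e \<in> K")
  case True
  have "adj_edges E e \<inter> K \<subseteq> K - {e}" by (auto simp: adj_edges_def)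
  then have "(\<Sum>f\<in>adj_edges E e \<inter> K. weight f - 1) \<le> (\<Sum>f\<in>K - {e}. weight f - 1)"
    using weight_excess_pos finite_K by (intro sum_mono2) (auto intro: less_imp_le)
  then show ?thesis using sum_adj_weight[OF assms] rho_weight[OF True] by simp
next
  case False
  then show ?thesis
    using sum_adj_weight[OF assms] sum_weight_excess_le[of "adj_edges E e \<inter> K"] below[OF assms]
    by (simp add: weight_def)
qed

lemma tight_outside:
  assumes "e \<in> edges E" "e \<notin> K" "(\<Sum>f\<in>adj_edges E e. weight f) = \<rho> * weight e"
  shows "of_int (edge_val E e) = d" "K \<subseteq> adj_edges E e"
proof -
  have sum: "of_int (edge_val E e) + (\<Sum>f\<in>adj_edges E e \<inter> K. weight f - 1) = d + (\<rho> - d)"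
    using sum_adj_weight[OF assms(1)] assms(2,3) by (simp add: weight_def)
  moreover have "(\<Sum>f\<in>adj_edges E e \<inter> K. weight f - 1) \<le> \<rho> - d"
    by (rule sum_weight_excess_le) blast
  ultimately show "of_int (edge_val E e) = d"
    using below[OF assms(1,2)] by linarith
  have "(\<Sum>f\<in>adj_edges E e \<inter> K. weight f - 1) = (\<Sum>f\<in>K. weight f - 1)"
    using sum below[OF assms(1,2)] sum_weight_excess_le[of "adj_edges E e \<inter> K"] sum_weight_excess
    by fastforce
  then have "adj_edges E e \<inter> K = K"
    using finite_K weight_excess_pos by (intro sum_eq_imp_subset_eq) auto
  then show "K \<subseteq> adj_edges E e" by blast
qed

lemma tight_inside:
  assumes "e \<in> K" "(\<Sum>f\<in>adj_edges E e. weight f) = \<rho> * weight e"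
  shows "K - {e} \<subseteq> adj_edges E e"
proof -
  have "(\<Sum>f\<in>adj_edges E e \<inter> K. weight f - 1) = (\<Sum>f\<in>K - {e}. weight f - 1)"
    using sum_adj_weight assms rho_weight K_edges by auto
  then have "adj_edges E e \<inter> K = K - {e}"
    using finite_K weight_excess_pos by (intro sum_eq_imp_subset_eq) (auto simp: adj_edges_def)
  then show ?thesis by blast
qed

theorem adj_edges_top_edge:
  assumes three: "3 \<le> card K" and x: "x \<noteq> 0" "signless_laplacian E *v x = (\<rho> + 2) *\<^sub>R x"
    and e: "e \<in> K"
  shows "adj_edges E e = K - {e}"
proof -
  have fin: "finite (edges E)" by simp
  have sub: "\<And>e. e \<in> edges E \<Longrightarrow> adj_edges E e \<subseteq> edges E" by (auto simp: adj_edges_def)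
  have rho_nonneg: "0 \<le> \<rho>" using d_nonneg d_le_rho by linarith
  have eigen: "\<And>e. e \<in> edges E \<Longrightarrow> (\<Sum>f\<in>adj_edges E e. edge_sum x f) = \<rho> * edge_sum x e"
    using adj_edges_sum_eigen[OF simple x(2)] by simp
  have nonzero: "\<exists>e\<in>edges E. edge_sum x e \<noteq> 0"
    using edge_sum_nonzero[OF simple x(2,1)] rho_nonneg by simp
  have pos: "\<And>e. e \<in> edges E \<Longrightarrow> 0 < weight e" by (rule weight_pos)
  obtain T where T: "T \<subseteq> edges E" "T \<noteq> {}"
    and T_tight: "\<And>e. e \<in> T \<Longrightarrow> adj_edges E e \<subseteq> T \<and> (\<Sum>f\<in>adj_edges E e. weight f) = \<rho> * weight e"
    using tight_set_exists[OF fin sub rho_nonneg eigen nonzero pos sum_adj_weight_le] by metis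
  have outside: "of_int (edge_val E h) = d \<and> K \<subseteq> adj_edges E h" if h: "h \<in> T" "h \<notin> K" for h
  proof -
    have "h \<in> edges E" using h(1) T(1) by blast
    then show ?thesis using tight_outside[OF _ h(2) conjunct2[OF T_tight[OF h(1)]]] by blast
  qed
  have clique: "K - {f} \<subseteq> adj_edges E f \<and> adj_edges E f \<subseteq> T" if "f \<in> K" "f \<in> T" for f
    using tight_inside[OF that(1) conjunct2[OF T_tight[OF that(2)]]] T_tight[OF that(2)] by blast
  have K_T: "K \<subseteq> T"
  proof -
    have "K \<noteq> {}" using three by auto
    then obtain f where f: "f \<in> K" by blast
    obtain e0 where e0: "e0 \<in> T" using T(2) by blast
    obtain i where i: "i \<in> K" "i \<in> T"
    proof (cases "e0 \<in> K")
      case True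
      then show ?thesis using that e0 by blast
    next
      case False
      then have "f \<in> adj_edges E e0" using outside[OF e0 False] f by blast
      then show ?thesis using that f T_tight[OF e0] by blast
    qed
    then show ?thesis using clique[OF i] by blast
  qed
  have clique: "K - {f} \<subseteq> adj_edges E f" if "f \<in> K" for f
    using clique[OF that] that K_T by blast
  have meets_all: "h \<inter> f \<noteq> {}"
    if h: "h \<in> edges E" "e \<in> K" "f \<in> K" "h \<inter> e \<noteq> {}" for h e f
  proof (cases "h \<in> K")
    case True
    then show ?thesis using h clique[of h] by (cases "h = f") (auto simp: adj_edges_def)
  next
    case False
    then have "h \<in> adj_edges E e" using h by (auto simp: adj_edges_def)
    moreover have "adj_edges E e \<subseteq> T" using T_tight h(2) K_T by blast
    ultimately have "K \<subseteq> adj_edges E h" using outside[OF _ False] by blast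
    then show ?thesis using h(3) by (auto simp: adj_edges_def)
  qed
  have "f \<in> K" if f: "f \<in> adj_edges E e" for f
  proof (rule ccontr)
    assume "f \<notin> K"
    have f_edge: "f \<in> edges E" "f \<inter> e \<noteq> {}" using f by (auto simp: adj_edges_def)
    have "adj_edges E e \<subseteq> T" using T_tight e K_T by blast
    then have "of_int (edge_val E f) = d" using outside[OF _ \<open>f \<notin> K\<close>] f by blast
    have "\<exists>f'\<in>K. edge_val E f' \<le> edge_val E f"
      by (rule edge_val_le_if_meets_all[OF simple K_edges three meets_all f_edge(1) \<open>f \<notin> K\<close> e f_edge(2)])
    then obtain f' where f': "f' \<in> K" "edge_val E f' \<le> edge_val E f" ..
    from f'(2) have "of_int (edge_val E f') \<le> (of_int (edge_val E f) :: real)" by simp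
    then show False using above[OF f'(1)] \<open>of_int (edge_val E f) = d\<close> by linarith
  qed
  then show ?thesis using clique[OF e] by (auto simp: adj_edges_def)
qed

theorem top_edges_clique:
  assumes "3 \<le> card K" "x \<noteq> 0" "signless_laplacian E *v x = (\<rho> + 2) *\<^sub>R x"
  shows "\<And>e. e \<in> K \<Longrightarrow> of_int (edge_val E e) = real (card K) - 1"
    and "\<rho> = real (card K) - 1"
proof -
  show val: "of_int (edge_val E e) = real (card K) - 1" if e: "e \<in> K" for e
  proof -
    have "e \<in> edges E" using e K_edges by blast
    then have "edge_val E e = int (card (adj_edges E e))" by (rule card_adj_edges[OF simple, symmetric])
    also have "\<dots> = int (card (K - {e}))" using adj_edges_top_edge[OF assms e] by simp
    finally have "edge_val E e = int (card (K - {e}))" .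
    then show ?thesis using e finite_K assms(1) by (simp add: of_nat_diff)
  qed
  define c where "c = real (card K) - 1"
  have "(\<Sum>f\<in>K. of_int (edge_val E f) - d) = real (card K) * (c - d)"
    using val by (simp add: c_def)
  then have "(\<rho> - d) * (\<rho> + 1) = (c - d) * (c + 1)"
    using rho_root by (simp add: c_def)
  then have "(\<rho> - c) * (\<rho> + c + 1 - d) = 0" by (simp add: algebra_simps)
  moreover have "0 < \<rho> + c + 1 - d" using d_le_rho assms(1) by (simp add: c_def)
  ultimately show "\<rho> = real (card K) - 1" by (simp add: c_def)
qed

end

section \<open>The sorted edge values\<close>

lemma Deltas_sorted_edges:
  fixes E :: "'n::finite \<Rightarrow> 'n \<Rightarrow> bool"
  obtains es where "distinct es" "set es = edges E" "length es = num_edges E"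
    "\<And>i j. i \<le> j \<Longrightarrow> j < length es \<Longrightarrow> edge_val E (es ! j) \<le> edge_val E (es ! i)"
    "\<And>i. 1 \<le> i \<Longrightarrow> i \<le> num_edges E \<Longrightarrow> Delta E i = of_int (edge_val E (es ! (i - 1)))"
proof -
  obtain l where l: "distinct l" "set l = edges E"
    using finite_distinct_list[of "edges E"] by auto
  define es where "es = rev (sort_key (edge_val E) l)"
  have sorted: "sort (map (edge_val E) l) = map (edge_val E) (sort_key (edge_val E) l)"
    by (rule properties_for_sort) (simp_all add: mset_map)
  have "image_mset (edge_val E) (mset_set (edges E)) = mset (map (edge_val E) l)"
    using l by (metis mset_set_set mset_map)
  then have Deltas: "Deltas E = map (edge_val E) es"
    unfolding Deltas_def es_def by (simp only: sorted_list_of_multiset_mset sorted rev_map)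
  have sorted_es: "sorted_wrt (\<lambda>x y. y \<le> x) (map (edge_val E) es)"
    by (simp add: es_def rev_map[symmetric] sorted_wrt_rev)
  have antimono: "edge_val E (es ! j) \<le> edge_val E (es ! i)" if "i \<le> j" "j < length es" for i j
    using that sorted_wrt_nth_less[OF sorted_es, of i j] by (cases "i = j") auto
  have "distinct es" "set es = edges E" using l by (simp_all add: es_def)
  moreover have len: "length es = num_edges E"
    using calculation by (metis distinct_card num_edges_def)
  moreover have "Delta E i = of_int (edge_val E (es ! (i - 1)))" if "1 \<le> i" "i \<le> num_edges E" for i
    using that len by (simp add: Delta_def Deltas)
  ultimately show ?thesis using that antimono by blast
qed

lemma Delta_antimono:
  fixes E :: "'n::finite \<Rightarrow> 'n \<Rightarrow> bool"
  assumes "1 \<le> i" "i \<le> j" "j \<le> num_edges E"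
  shows "Delta E j \<le> Delta E i"
proof (rule Deltas_sorted_edges[of E])
  fix es :: "'n set list"
  assume "distinct es" "set es = edges E" "length es = num_edges E"
    "\<And>i j. i \<le> j \<Longrightarrow> j < length es \<Longrightarrow> edge_val E (es ! j) \<le> edge_val E (es ! i)"
    "\<And>i. 1 \<le> i \<Longrightarrow> i \<le> num_edges E \<Longrightarrow> Delta E i = of_int (edge_val E (es ! (i - 1)))"
  then show ?thesis using assms by simp
qed

lemma Delta_in_edge_vals:
  fixes E :: "'n::finite \<Rightarrow> 'n \<Rightarrow> bool"
  assumes "1 \<le> i" "i \<le> num_edges E"
  shows "\<exists>f\<in>edges E. Delta E i = of_int (edge_val E f)"
proof (rule Deltas_sorted_edges[of E])
  fix es :: "'n set list"
  assume "distinct es" "set es = edges E" "length es = num_edges E"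
    "\<And>i j. i \<le> j \<Longrightarrow> j < length es \<Longrightarrow> edge_val E (es ! j) \<le> edge_val E (es ! i)"
    "\<And>i. 1 \<le> i \<Longrightarrow> i \<le> num_edges E \<Longrightarrow> Delta E i = of_int (edge_val E (es ! (i - 1)))"
  moreover have "i - 1 < length es" using assms calculation(3) by simp
  ultimately show ?thesis using assms by (metis nth_mem)
qed

lemma edges_above_Delta:
  fixes E :: "'n::finite \<Rightarrow> 'n \<Rightarrow> bool"
  assumes "2 \<le> k" "k \<le> num_edges E" "Delta E k < Delta E (k - 1)"
  defines "K \<equiv> {f \<in> edges E. Delta E k < of_int (edge_val E f)}"
  shows "card K = k - 1"
    and "(\<Sum>f\<in>K. of_int (edge_val E f) - Delta E k) = (\<Sum>i=1..k-1. Delta E i - Delta E k)"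
proof -
  have "card K = k - 1 \<and> (\<Sum>f\<in>K. of_int (edge_val E f) - Delta E k) = (\<Sum>i=1..k-1. Delta E i - Delta E k)"
  proof (rule Deltas_sorted_edges[of E])
    fix es :: "'n set list"
    assume es: "distinct es" "set es = edges E" "length es = num_edges E"
      and antimono: "\<And>i j. i \<le> j \<Longrightarrow> j < length es \<Longrightarrow> edge_val E (es ! j) \<le> edge_val E (es ! i)"
      and Delta: "\<And>i. 1 \<le> i \<Longrightarrow> i \<le> num_edges E \<Longrightarrow> Delta E i = of_int (edge_val E (es ! (i - 1)))"
    have Dk: "Delta E k = of_int (edge_val E (es ! (k - 1)))"
      and Dk1: "Delta E (k - 1) = of_int (edge_val E (es ! (k - 2)))"
      using Delta[of k] Delta[of "k - 1"] assms(1,2) by (simp_all add: numeral_2_eq_2)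
    have mem_K: "es ! j \<in> K \<longleftrightarrow> j < k - 1" if j: "j < length es" for j
    proof -
      have "es ! j \<in> edges E" using j es(2) nth_mem by blast
      then have "es ! j \<in> K \<longleftrightarrow> edge_val E (es ! (k - 1)) < edge_val E (es ! j)"
        unfolding K_def Dk by simp
      also have "\<dots> \<longleftrightarrow> j < k - 1"
      proof
        assume "edge_val E (es ! (k - 1)) < edge_val E (es ! j)"
        moreover have "edge_val E (es ! j) \<le> edge_val E (es ! (k - 1))" if "k - 1 \<le> j"
          using antimono[OF that j] .
        ultimately show "j < k - 1" by force
      next
        assume "j < k - 1"
        then have "edge_val E (es ! (k - 2)) \<le> edge_val E (es ! j)" using antimono[of j "k - 2"] es(3) assms(2) by simp
        moreover have "edge_val E (es ! (k - 1)) < edge_val E (es ! (k - 2))" using assms(3) Dk Dk1 by simp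
        ultimately show "edge_val E (es ! (k - 1)) < edge_val E (es ! j)" by simp
      qed
      finally show ?thesis .
    qed
    have K: "K = (\<lambda>j. es ! j) ` {..<k - 1}"
    proof
      show "K \<subseteq> (\<lambda>j. es ! j) ` {..<k - 1}"
      proof
        fix f assume "f \<in> K"
        moreover obtain j where "j < length es" "f = es ! j"
          using \<open>f \<in> K\<close> es(2) in_set_conv_nth[of f es] by (auto simp: K_def)
        ultimately show "f \<in> (\<lambda>j. es ! j) ` {..<k - 1}" using mem_K by blast
      qed
      show "(\<lambda>j. es ! j) ` {..<k - 1} \<subseteq> K"
        using mem_K es(3) assms(2) by auto
    qed
    have inj: "inj_on (\<lambda>j. es ! j) {..<k - 1}"
      using es(1,3) assms(2) by (auto simp: inj_on_def nth_eq_iff_index_eq)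
    have "card K = k - 1" using card_image[OF inj] K by simp
    have "(\<Sum>f\<in>K. of_int (edge_val E f) - Delta E k)
        = (\<Sum>j<k - 1. of_int (edge_val E (es ! j)) - Delta E k)"
      unfolding K sum.reindex[OF inj] comp_def ..
    also have "\<dots> = (\<Sum>j<k - 1. Delta E (Suc j) - Delta E k)"
      using Delta assms(2) by (intro sum.cong refl) simp
    also have "\<dots> = (\<Sum>i=1..k-1. Delta E i - Delta E k)"
      by (simp add: sum.atLeast1_atMost_eq)
    finally show ?thesis using \<open>card K = k - 1\<close> by blast
  qed
  then show "card K = k - 1"
    and "(\<Sum>f\<in>K. of_int (edge_val E f) - Delta E k) = (\<Sum>i=1..k-1. Delta E i - Delta E k)"
    by blast+
qed

lemma psi_eq_if_Delta_eq:
  assumes "2 \<le> k" "Delta E (k - 1) = Delta E k"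
  shows "psi E (k - 1) = psi E k"
proof -
  have "k - 1 = Suc (k - 2)" using assms(1) by simp
  then have "(\<Sum>i=1..k-1. Delta E i - Delta E k) = (\<Sum>i=1..k-1-1. Delta E i - Delta E (k - 1))"
    using assms(2) by (simp add: sum.cl_ivl_Suc)
  then show ?thesis using assms(2) by (simp add: psi_def)
qed

lemma psi_1: "-1 \<le> Delta E 1 \<Longrightarrow> psi E 1 = Delta E 1 + 2"
  by (simp add: psi_def)

lemma psi_root:
  fixes d s q :: real
  assumes "0 \<le> d" "0 \<le> s" "q = 1 + (d + 1 + sqrt ((d + 1)\<^sup>2 + 4 * s)) / 2"
  shows "d \<le> q - 2" and "(q - 2 - d) * (q - 2 + 1) = s"
proof -
  define r where "r = sqrt ((d + 1)\<^sup>2 + 4 * s)"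
  have "d + 1 \<le> r" unfolding r_def using assms(1,2) by (intro real_le_rsqrt) auto
  then show "d \<le> q - 2" using assms(3) unfolding r_def[symmetric] by (simp add: field_simps)
  have r_eq: "r = 2 * q - d - 3" using assms(3) by (simp add: r_def field_simps)
  have "4 * ((q - 2 - d) * (q - 2 + 1)) = r\<^sup>2 - (d + 1)\<^sup>2"
    unfolding r_eq by (simp add: power2_eq_square algebra_simps)
  moreover have "r\<^sup>2 = (d + 1)\<^sup>2 + 4 * s" using assms(1,2) by (simp add: r_def)
  ultimately show "(q - 2 - d) * (q - 2 + 1) = s" by linarith
qed

lemma top_edges_if_psi_eq:
  fixes E :: "'n::finite \<Rightarrow> 'n \<Rightarrow> bool"
  assumes "simple_graph E" "2 \<le> k" "k \<le> num_edges E" "Delta E k < Delta E (k - 1)"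
    and "q = psi E k"
  shows "top_edges E {f \<in> edges E. Delta E k < of_int (edge_val E f)} (Delta E k) (q - 2)"
proof -
  define K where "K = {f \<in> edges E. Delta E k < of_int (edge_val E f)}"
  define d where "d = Delta E k"
  have d_nonneg: "0 \<le> d"
    using Delta_in_edge_vals[of k E] edge_val_nonneg[OF assms(1)] assms(2,3) by (force simp: d_def)
  have "0 \<le> (\<Sum>f\<in>K. of_int (edge_val E f) - d)" by (rule sum_nonneg) (simp add: K_def d_def)
  moreover have "q = 1 + (d + 1 + sqrt ((d + 1)\<^sup>2 + 4 * (\<Sum>f\<in>K. of_int (edge_val E f) - d))) / 2"
    using assms(5) edges_above_Delta(2)[OF assms(2-4)] by (simp add: psi_def d_def K_def)
  ultimately have "d \<le> q - 2" and "(q - 2 - d) * (q - 2 + 1) = (\<Sum>f\<in>K. of_int (edge_val E f) - d)"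
    by (rule psi_root[OF d_nonneg])+
  then show ?thesis
    using assms(1) d_nonneg unfolding K_def d_def by unfold_locales auto
qed

theorem mainTheorem3:
  fixes E :: "'n::finite \<Rightarrow> 'n \<Rightarrow> bool"
  assumes "simple_graph E"
    and "num_edges E \<ge> 4"
    and "4 \<le> k" and "k \<le> num_edges E"
  shows "\<not> (q_index E < Min {psi E i | i. 1 \<le> i \<and> i \<le> k - 1} \<and> q_index E = psi E k)"
proof
  assume H: "q_index E < Min {psi E i | i. 1 \<le> i \<and> i \<le> k - 1} \<and> q_index E = psi E k"
  have below_psi: "q_index E < psi E i" if "1 \<le> i" "i \<le> k - 1" for i
  proof -
    have "Min {psi E i | i. 1 \<le> i \<and> i \<le> k - 1} \<le> psi E i" using that by (intro Min_le) auto
    then show ?thesis using H by linarith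
  qed
  have "q_index E < psi E (k - 1)" using below_psi assms(3) by simp
  then have "Delta E (k - 1) \<noteq> Delta E k" using psi_eq_if_Delta_eq[of k E] H assms(3) by auto
  moreover have "Delta E k \<le> Delta E (k - 1)" using Delta_antimono[of "k - 1" k E] assms by simp
  ultimately have strict: "Delta E k < Delta E (k - 1)" by simp
  define K where "K = {f \<in> edges E. Delta E k < of_int (edge_val E f)}"
  interpret top_edges E K "Delta E k" "q_index E - 2"
    unfolding K_def by (rule top_edges_if_psi_eq) (use assms strict H in auto)
  have three: "3 \<le> card K"
    using edges_above_Delta(1)[of k E] assms strict unfolding K_def by simp
  obtain x where x: "x \<noteq> 0" "signless_laplacian E *v x = (q_index E - 2 + 2) *\<^sub>R x"
    using q_index_eigenvector[OF assms(1)] by auto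
  obtain f where f: "f \<in> edges E" "Delta E 1 = of_int (edge_val E f)"
    using Delta_in_edge_vals[of 1 E] assms by auto
  moreover have "Delta E (k - 1) \<le> Delta E 1" using Delta_antimono[of 1 "k - 1" E] assms by simp
  then have "f \<in> K" using strict f by (simp add: K_def)
  ultimately have "psi E 1 = q_index E"
    using psi_1[of E] top_edges_clique[OF three x] by simp
  moreover have "q_index E < psi E 1" using below_psi assms(3) by simp
  ultimately show False by simp
qed

end
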